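(* Let $p\ge2$ and consider the dynamic panel logit AR($p$) model with $T=3$: $(Y^{(0)},X,A)$ has an arbitrary joint distribution with $Y^{(0)}=(Y_{1-p},\dots,Y_0)\in\{0,1\}^p$, $X=(X_1,X_2,X_3)\in\mathbb{R}^{K\times3}$, $A\in\mathbb{R}$, and conditionally on $(Y^{(0)},X,A)$ the outcomes $Y=(Y_1,Y_2,Y_3)$ satisfy, for $t\in\{1,2,3\}$, $$\Pr(Y_t=1\mid Y_{1-p},\dots,Y_{t-1},X,A)=\frac{\exp(X_t'\beta_0+\sum_{\ell=1}^pY_{t-\ell}\gamma_{0,\ell}+A)}{1+\exp(X_t'\beta_0+\sum_{\ell=1}^pY_{t-\ell}\gamma_{0,\ell}+A)},$$ with true parameters $\beta_0\in\mathbb{R}^K$, $\gamma_0=(\gamma_{0,1},\dots,\gamma_{0,p})\in\mathbb{R}^p$. Let $0_r,1_r$ be $r$-vectors of zeros and ones, $x_{ts}=x_t-x_s$, and for $y=(y_1,y_2,y_3)$ define $$m_{(0_p)}=\begin{cases}e^{x_{12}'\beta}&y=(0,1,0),\\ e^{x_{12}'\beta-\gamma_1}&y=(0,1,1),\\ -1&(y_1,y_2)=(1,0),\\0&\text{otherwise},\end{cases}\qquad m_{(0,1_{p-1})}=\begin{cases}-1&(y_1,y_2)=(0,1),\\ e^{x_{21}'\beta-\gamma_1+\gamma_p}&y=(1,0,0),\\ e^{x_{21}'\beta+\gamma_p}&y=(1,0,1),\\0&\text{otherwise},\end{cases}$$ $$m_{(1,0_{p-1})}=\begin{cases}e^{x_{12}'\beta+\gamma_p}&y=(0,1,0),\\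 e^{x_{12}'\beta-\gamma_1+\gamma_p}&y=(0,1,1),\\ -1&(y_1,y_2)=(1,0),\\0&\text{otherwise},\end{cases}\qquad m_{(1_p)}=\begin{cases}-1&(y_1,y_2)=(0,1),\\ e^{x_{21}'\beta-\gamma_1}&y=(1,0,0),\\ e^{x_{21}'\beta}&y=(1,0,1),\\0&\text{otherwise},\end{cases}$$ as functions of $(y,x,\beta,\gamma)$. For $k\in\{1,\dots,K\}$ let $\mathcal{X}_{k,+}=\{x\in\mathbb{R}^{K\times3}:x_{k,1}<x_{k,2}\}$, $\mathcal{X}_{k,-}=\{x\in\mathbb{R}^{K\times3}:x_{k,1}>x_{k,2}\}$ (with $x_{k,t}$ the $k$-th component of $x_t$), and for $s\in\{-,+\}^K$ let $\mathcal{X}_s=\bigcap_{k=1}^K\mathcal{X}_{k,s_k}$. (i) Let $y^{(0)}\in\{0_p,1_p\}$. Assume that for all $\epsilon>0$ and $s\in\{-,+\}^K$, $\Pr(Y^{(0)}=y^{(0)},X\in\mathcal{X}_s,\|X_2-X_3\|\le\epsilon)>0$, and that the expectations below are well-defined. Then $\mathbb{E}[m_{y^{(0)}}(Y,X,\beta,\gamma)\mid Y^{(0)}=y^{(0)},X\in\mathcal{X}_s,X_2=X_3]=0$ for all $s\in\{-,+\}^K$ if and only if $\beta=\beta_0$ and $\gamma_1=\gamma_{0,1}$. (ii) Let $y^{(0)}\in\{(0,1_{p-1}),(1,0_{p-1})\}$. Assume that for all $\epsilon>0$, $\Pr(Y^{(0)}=y^{(0)},\|X_2-X_3\|\le\epsilon)>0$,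 and that the expectation below is well-defined. Then $\mathbb{E}[m_{y^{(0)}}(Y,X,\beta_0,(\gamma_{0,1},\gamma_2,\dots,\gamma_p))\mid Y^{(0)}=y^{(0)},X_2=X_3]=0$ if and only if $\gamma_p=\gamma_{0,p}$.
   Context: Expectations are taken under the true data distribution (generated with $\beta_0,\gamma_0$), while moment functions are evaluated at candidate parameter values. The conditioning on $X_2=X_3$ is conditioning on the event that the second and third regressor vectors coincide. *)

theory Defs
  imports "HOL-Probability.Probability"
begin

text \<open>The four initial conditions Y0 = (Y_{1-p},...,Y_0) appearing in the theorem:
  Zeros = 0_p, ZeroOnes = (0,1_{p-1}), OneZeros = (1,0_{p-1}), Ones = 1_p.\<close>
datatype init = Zeros | ZeroOnes | OneZeros | Ones

definition init_val :: "nat \<Rightarrow> init \<Rightarrow> int \<Rightarrow> bool" where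
  "init_val p i t = (case i of Zeros \<Rightarrow> False | Ones \<Rightarrow> True
     | ZeroOnes \<Rightarrow> t \<noteq> 1 - int p | OneZeros \<Rightarrow> t = 1 - int p)"

text \<open>Regressors x = (x_1, x_2, x_3), each in R^K (K = CARD('k)).\<close>
type_synonym 'k regr = "(real^'k) \<times> (real^'k) \<times> (real^'k)"

definition xt :: "'k regr \<Rightarrow> int \<Rightarrow> real^'k" where
  "xt x t = (if t = 1 then fst x else if t = 2 then fst (snd x) else snd (snd x))"

definition path :: "nat \<Rightarrow> init \<Rightarrow> bool \<times> bool \<times> bool \<Rightarrow> int \<Rightarrow> bool" where
  "path p i y t = (if t = 1 then fst y else if t = 2 then fst (snd y)
     else if t = 3 then snd (snd y) else init_val p i t)"

definition logistic :: "real \<Rightarrow> real" where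
  "logistic u = exp u / (1 + exp u)"

text \<open>Pr(Y = y | Y0 = i, X = x, A = a) under the true parameters (beta0, gamma0)
  of the dynamic logit AR(p) model; gamma0 is indexed by 1..p.\<close>
definition outcome_prob ::
  "nat \<Rightarrow> real^'k \<Rightarrow> (nat \<Rightarrow> real) \<Rightarrow> init \<Rightarrow> 'k regr \<Rightarrow> real \<Rightarrow> bool \<times> bool \<times> bool \<Rightarrow> real" where
  "outcome_prob p \<beta>0 \<gamma>0 i x a y =
     (\<Prod>t\<in>{1..3::int}.
        let u = xt x t \<bullet> \<beta>0 + (\<Sum>l\<in>{1..p}. if path p i y (t - int l) then \<gamma>0 l else 0) + a
        in if path p i y t then logistic u else 1 - logistic u)"

definition m_zeros :: "nat \<Rightarrow> bool \<times> bool \<times> bool \<Rightarrow> 'k regr \<Rightarrow> real^'k \<Rightarrow> (nat \<Rightarrow> real) \<Rightarrow> real" where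
  "m_zeros p y x \<beta> \<gamma> = (let d = (fst x - fst (snd x)) \<bullet> \<beta> in
     if y = (False, True, False) then exp d
     else if y = (False, True, True) then exp (d - \<gamma> 1)
     else if fst y \<and> \<not> fst (snd y) then -1 else 0)"

definition m_zero_ones :: "nat \<Rightarrow> bool \<times> bool \<times> bool \<Rightarrow> 'k regr \<Rightarrow> real^'k \<Rightarrow> (nat \<Rightarrow> real) \<Rightarrow> real" where
  "m_zero_ones p y x \<beta> \<gamma> = (let d = (fst (snd x) - fst x) \<bullet> \<beta> in
     if \<not> fst y \<and> fst (snd y) then -1
     else if y = (True, False, False) then exp (d - \<gamma> 1 + \<gamma> p)
     else if y = (True, False, True) then exp (d + \<gamma> p)
     else 0)"

definition m_one_zeros :: "nat \<Rightarrow> bool \<times> bool \<times> bool \<Rightarrow> 'k regr \<Rightarrow> real^'k \<Rightarrow> (nat \<Rightarrow> real) \<Rightarrow> real" where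
  "m_one_zeros p y x \<beta> \<gamma> = (let d = (fst x - fst (snd x)) \<bullet> \<beta> in
     if y = (False, True, False) then exp (d + \<gamma> p)
     else if y = (False, True, True) then exp (d - \<gamma> 1 + \<gamma> p)
     else if fst y \<and> \<not> fst (snd y) then -1 else 0)"

definition m_ones :: "nat \<Rightarrow> bool \<times> bool \<times> bool \<Rightarrow> 'k regr \<Rightarrow> real^'k \<Rightarrow> (nat \<Rightarrow> real) \<Rightarrow> real" where
  "m_ones p y x \<beta> \<gamma> = (let d = (fst (snd x) - fst x) \<bullet> \<beta> in
     if \<not> fst y \<and> fst (snd y) then -1
     else if y = (True, False, False) then exp (d - \<gamma> 1)
     else if y = (True, False, True) then exp d
     else 0)"

definition moment :: "nat \<Rightarrow> init \<Rightarrow> bool \<times> bool \<times> bool \<Rightarrow> 'k regr \<Rightarrow> real^'k \<Rightarrow> (nat \<Rightarrow> real) \<Rightarrow> real" where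
  "moment p i = (case i of Zeros \<Rightarrow> m_zeros p | ZeroOnes \<Rightarrow> m_zero_ones p
     | OneZeros \<Rightarrow> m_one_zeros p | Ones \<Rightarrow> m_ones p)"

definition cond_moment ::
  "nat \<Rightarrow> real^'k \<Rightarrow> (nat \<Rightarrow> real) \<Rightarrow> init \<Rightarrow> real^'k \<Rightarrow> (nat \<Rightarrow> real) \<Rightarrow> 'k regr \<times> real \<Rightarrow> real" where
  "cond_moment p \<beta>0 \<gamma>0 i \<beta> \<gamma> z =
     (\<Sum>y\<in>UNIV. moment p i y (fst z) \<beta> \<gamma> * outcome_prob p \<beta>0 \<gamma>0 i (fst z) (snd z) y)"

text \<open>X_s for a sign vector s (True = +, False = -).\<close>
definition sign_region :: "('k::finite \<Rightarrow> bool) \<Rightarrow> 'k regr set" where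
  "sign_region s = {x. \<forall>k. if s k then fst x $ k < fst (snd x) $ k else fst x $ k > fst (snd x) $ k}"

definition cond_exp :: "('a \<times> real) measure \<Rightarrow> ('a \<times> real) set \<Rightarrow> ('a \<times> real \<Rightarrow> real) \<Rightarrow> real" where
  "cond_exp \<nu> S f = (LINT z:S|\<nu>. f z) / measure \<nu> S"

end

theory Submission
  imports Defs
begin

text \<open>On the event X_2 = X_3, the conditional mean of each moment function given the initial
  condition, X and A factors as a positive weight times an elementary bracket. For the initial
  conditions 0_p and 1_p the bracket is
  exp ((x_1 - x_2)'u) (alpha exp (-gamma_1) + w) - (alpha exp (-gamma_01) + w)
  with u = +-(beta - beta_0), alpha > 0 and w >= 0. On the sign region of u (if
  gamma_1 <= gamma_01) or of -u (otherwise) it has a strict sign unless u = 0 and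
  gamma_1 = gamma_01, and since that region has positive probability the conditional
  expectation cannot vanish. For the initial conditions (0,1_{p-1}) and (1,0_{p-1}) the bracket
  is the constant exp (gamma_p - gamma_0p) - 1.\<close>

definition logit_prob :: "real \<Rightarrow> bool \<Rightarrow> real" where
  "logit_prob u y = (if y then exp u else 1) / (1 + exp u)"

definition presample_effect :: "nat \<Rightarrow> (nat \<Rightarrow> real) \<Rightarrow> init \<Rightarrow> nat \<Rightarrow> real" where
  "presample_effect p \<gamma> i t = (\<Sum>l\<in>{t..p}. if init_val p i (int t - int l) then \<gamma> l else 0)"

lemma if_logistic_eq_logit_prob:
  "(if y then logistic u else 1 - logistic u) = logit_prob u y"
proof -
  have "1 + exp u > 0" by (simp add: add_pos_pos)
  then show ?thesis by (cases y) (simp_all add: logistic_def logit_prob_def divide_simps)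
qed

lemma logit_prob_True: "logit_prob u True = exp u * logit_prob u False"
  by (simp add: logit_prob_def)

lemma logit_prob_False_add_True: "logit_prob u False + logit_prob u True = 1"
proof -
  have "1 + exp u > 0" by (simp add: add_pos_pos)
  then show ?thesis by (simp add: logit_prob_def divide_simps)
qed

lemma logit_prob_pos: "logit_prob u y > 0"
  by (simp add: logit_prob_def add_pos_pos)

lemma lag_sum_split:
  assumes "1 \<le> t" "t \<le> Suc p"
  shows "(\<Sum>l\<in>{1..p}. if path p i y (int t - int l) then \<gamma> l else 0)
    = (\<Sum>l\<in>{1..<t}. if path p i y (int t - int l) then \<gamma> l else 0) + presample_effect p \<gamma> i t"
proof -
  have "{1..p} = {1..<t} \<union> {t..p}" using assms by auto
  moreover have "path p i y (int t - int l) = init_val p i (int t - int l)" if "l \<in> {t..p}" for l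
    using that assms by (simp add: path_def)
  ultimately show ?thesis
    by (simp add: sum.union_disjoint presample_effect_def ivl_disj_int)
qed

lemma outcome_prob_factor:
  assumes "p \<ge> 2"
  shows "outcome_prob p \<beta>0 \<gamma>0 i (x1, x2, x3) a (y1, y2, y3) =
    logit_prob (x1 \<bullet> \<beta>0 + a + presample_effect p \<gamma>0 i 1) y1
    * logit_prob (x2 \<bullet> \<beta>0 + a + (if y1 then \<gamma>0 1 else 0) + presample_effect p \<gamma>0 i 2) y2
    * logit_prob (x3 \<bullet> \<beta>0 + a + (if y2 then \<gamma>0 1 else 0) + (if y1 then \<gamma>0 2 else 0)
        + presample_effect p \<gamma>0 i 3) y3"
proof -
  let ?lags = "\<lambda>t. \<Sum>l\<in>{1..p}. if path p i (y1, y2, y3) (t - int l) then \<gamma>0 l else 0"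
  have "?lags 1 = presample_effect p \<gamma>0 i 1"
    using lag_sum_split[of 1 p i _ \<gamma>0] by simp
  moreover have "{1..<2::nat} = {1}" by auto
  then have "?lags 2 = (if y1 then \<gamma>0 1 else 0) + presample_effect p \<gamma>0 i 2"
    using lag_sum_split[of 2 p i _ \<gamma>0] assms by (simp add: path_def)
  moreover have "{1..<3::nat} = {1, 2}" by auto
  then have "?lags 3 = (if y2 then \<gamma>0 1 else 0) + (if y1 then \<gamma>0 2 else 0) + presample_effect p \<gamma>0 i 3"
    using lag_sum_split[of 3 p i _ \<gamma>0] assms by (simp add: path_def)
  moreover have "{1..3::int} = {1, 2, 3}" by auto
  ultimately show ?thesis
    by (simp add: outcome_prob_def xt_def if_logistic_eq_logit_prob path_def algebra_simps)
qed

lemma sum_UNIV_bool3: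
  "(\<Sum>y\<in>UNIV. f y) = f (False, False, False) + f (False, False, True) + f (False, True, False)
    + f (False, True, True) + f (True, False, False) + f (True, False, True) + f (True, True, False)
    + f (True, True, True)"
  by (simp add: UNIV_Times_UNIV[symmetric] sum.cartesian_product[symmetric] UNIV_bool add.assoc
      del: UNIV_Times_UNIV)

lemma presample_effect_Zeros: "presample_effect p \<gamma> Zeros t = 0"
  by (simp add: presample_effect_def init_val_def)

lemma presample_effect_Ones: "presample_effect p \<gamma> Ones t = sum \<gamma> {t..p}"
  by (simp add: presample_effect_def init_val_def)

lemma presample_effect_ZeroOnes:
  "1 \<le> p \<Longrightarrow> presample_effect p \<gamma> ZeroOnes 1 = sum \<gamma> {1..p} - \<gamma> p"
  "2 \<le> t \<Longrightarrow> presample_effect p \<gamma> ZeroOnes t = sum \<gamma> {t..p}"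
proof -
  have "{1..p} \<inter> {l. l \<noteq> p} = {1..p} - {p}" by auto
  then show "1 \<le> p \<Longrightarrow> presample_effect p \<gamma> ZeroOnes 1 = sum \<gamma> {1..p} - \<gamma> p"
    by (simp add: presample_effect_def init_val_def sum.If_cases sum_diff1)
  show "2 \<le> t \<Longrightarrow> presample_effect p \<gamma> ZeroOnes t = sum \<gamma> {t..p}"
    by (auto simp: presample_effect_def init_val_def intro!: sum.cong)
qed

lemma presample_effect_OneZeros:
  "1 \<le> p \<Longrightarrow> presample_effect p \<gamma> OneZeros 1 = \<gamma> p"
  "2 \<le> t \<Longrightarrow> presample_effect p \<gamma> OneZeros t = 0"
  by (auto simp: presample_effect_def init_val_def sum.If_cases)

lemma cond_moment_Zeros:
  assumes "p \<ge> 2" and b: "b = x1 \<bullet> \<beta>0 + a" and c: "c = x2 \<bullet> \<beta>0 + a"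
  shows "cond_moment p \<beta>0 \<gamma>0 Zeros \<beta> \<gamma> ((x1, x2, x2), a) =
    logit_prob b True * logit_prob c False * logit_prob (c + \<gamma>0 1) False
    * (exp ((x1 - x2) \<bullet> (\<beta> - \<beta>0)) * (exp (c + \<gamma>0 1) * exp (- \<gamma> 1) + 1)
       - (exp (c + \<gamma>0 1) * exp (- \<gamma>0 1) + 1))"
proof -
  let ?P = "logit_prob" and ?t = "(x1 - x2) \<bullet> (\<beta> - \<beta>0)"
  have "(x1 - x2) \<bullet> \<beta> = ?t + b - c"
    using b c by (simp add: algebra_simps inner_diff_left inner_diff_right)
  then have "cond_moment p \<beta>0 \<gamma>0 Zeros \<beta> \<gamma> ((x1, x2, x2), a) =
      exp (?t + b - c) * (?P b False * ?P c True * ?P (c + \<gamma>0 1) False)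
    + exp (?t + b - c - \<gamma> 1) * (?P b False * ?P c True * ?P (c + \<gamma>0 1) True)
    - ?P b True * ?P (c + \<gamma>0 1) False * ?P (c + \<gamma>0 2) False
    - ?P b True * ?P (c + \<gamma>0 1) False * ?P (c + \<gamma>0 2) True"
    unfolding cond_moment_def fst_conv snd_conv sum_UNIV_bool3 outcome_prob_factor[OF assms(1)]
      presample_effect_Zeros
    by (simp add: moment_def m_zeros_def b[symmetric] c[symmetric])
  also have "\<dots> = ?P b True * ?P c False * ?P (c + \<gamma>0 1) False
    * (exp ?t * (exp (c + \<gamma>0 1) * exp (- \<gamma> 1) + 1) - (exp (c + \<gamma>0 1) * exp (- \<gamma>0 1) + 1))"
    using logit_prob_False_add_True[of c] logit_prob_False_add_True[of "c + \<gamma>0 2"]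
    by (simp add: logit_prob_True exp_add exp_diff exp_minus field_simps) algebra
  finally show ?thesis .
qed

lemma cond_moment_Ones:
  assumes "p \<ge> 2" and b: "b = x1 \<bullet> \<beta>0 + a" and c: "c = x2 \<bullet> \<beta>0 + a"
    and S1: "S1 = sum \<gamma>0 {1..p}" and S2: "S2 = sum \<gamma>0 {2..p}"
  shows "cond_moment p \<beta>0 \<gamma>0 Ones \<beta> \<gamma> ((x1, x2, x2), a) =
    logit_prob (b + S1) False * logit_prob (c + S2) False * logit_prob (c + S1) True
    * (exp ((x1 - x2) \<bullet> (\<beta>0 - \<beta>)) * (exp (- \<gamma> 1) + exp (c + S2))
       - (exp (- \<gamma>0 1) + exp (c + S2)))"
proof -
  let ?P = "logit_prob" and ?t = "(x1 - x2) \<bullet> (\<beta>0 - \<beta>)" and ?S3 = "sum \<gamma>0 {3..p}"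
  have "{1..p} = insert 1 {2..p}" "{2..p} = insert 2 {3..p}" using assms(1) by auto
  then have sum_split: "S1 = \<gamma>0 1 + S2" "S2 = \<gamma>0 2 + ?S3" by (simp_all add: S1 S2)
  have presample: "presample_effect p \<gamma>0 Ones 1 = S1" "presample_effect p \<gamma>0 Ones 2 = S2"
    "presample_effect p \<gamma>0 Ones 3 = ?S3"
    by (simp_all only: presample_effect_Ones S1 S2)
  have "(x2 - x1) \<bullet> \<beta> = ?t + c - b"
    using b c by (simp add: algebra_simps inner_diff_left inner_diff_right)
  then have "cond_moment p \<beta>0 \<gamma>0 Ones \<beta> \<gamma> ((x1, x2, x2), a) =
    - ?P (b + S1) False * ?P (c + S2) True * ?P (c + \<gamma>0 1 + ?S3) False
    - ?P (b + S1) False * ?P (c + S2) True * ?P (c + \<gamma>0 1 + ?S3) True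
    + exp (?t + c - b - \<gamma> 1) * (?P (b + S1) True * ?P (c + S1) False * ?P (c + S2) False)
    + exp (?t + c - b) * (?P (b + S1) True * ?P (c + S1) False * ?P (c + S2) True)"
    unfolding cond_moment_def fst_conv snd_conv sum_UNIV_bool3 outcome_prob_factor[OF assms(1)] presample
    using sum_split by (simp add: moment_def m_ones_def b[symmetric] c[symmetric]) (simp add: algebra_simps)
  also have "\<dots> = ?P (b + S1) False * ?P (c + S2) False * ?P (c + S1) True
    * (exp ?t * (exp (- \<gamma> 1) + exp (c + S2)) - (exp (- \<gamma>0 1) + exp (c + S2)))"
    using logit_prob_False_add_True[of "c + S1"] logit_prob_False_add_True[of "c + \<gamma>0 1 + ?S3"] sum_split(1)
    by (simp add: logit_prob_True exp_add exp_diff exp_minus field_simps) algebra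
  finally show ?thesis .
qed

lemma cond_moment_ZeroOnes:
  assumes "p \<ge> 2" and b: "b = x1 \<bullet> \<beta>0 + a" and c: "c = x2 \<bullet> \<beta>0 + a"
    and S1: "S1 = sum \<gamma>0 {1..p}" and S2: "S2 = sum \<gamma>0 {2..p}"
  shows "cond_moment p \<beta>0 \<gamma>0 ZeroOnes \<beta>0 (\<gamma>(1 := \<gamma>0 1)) ((x1, x2, x2), a) =
    logit_prob (b + S1 - \<gamma>0 p) False * logit_prob (c + S2) True * (exp (\<gamma> p - \<gamma>0 p) - 1)"
proof -
  let ?P = "logit_prob" and ?S3 = "sum \<gamma>0 {3..p}"
  have "{1..p} = insert 1 {2..p}" "{2..p} = insert 2 {3..p}" using assms(1) by auto
  then have sum_split: "S1 = \<gamma>0 1 + S2" "S2 = \<gamma>0 2 + ?S3" by (simp_all add: S1 S2)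
  have presample: "presample_effect p \<gamma>0 ZeroOnes 1 = S1 - \<gamma>0 p" "presample_effect p \<gamma>0 ZeroOnes 2 = S2"
    "presample_effect p \<gamma>0 ZeroOnes 3 = ?S3"
    using assms(1) by (simp_all only: presample_effect_ZeroOnes S1 S2)
  have "(x2 - x1) \<bullet> \<beta>0 = c - b"
    using b c by (simp add: algebra_simps inner_diff_left)
  moreover have "(\<gamma>(1 := \<gamma>0 1)) p = \<gamma> p" using assms(1) by simp
  ultimately have "cond_moment p \<beta>0 \<gamma>0 ZeroOnes \<beta>0 (\<gamma>(1 := \<gamma>0 1)) ((x1, x2, x2), a) =
    - ?P (b + (S1 - \<gamma>0 p)) False * ?P (c + S2) True * ?P (c + \<gamma>0 1 + ?S3) False
    - ?P (b + (S1 - \<gamma>0 p)) False * ?P (c + S2) True * ?P (c + \<gamma>0 1 + ?S3) True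
    + exp (c - b - \<gamma>0 1 + \<gamma> p) * (?P (b + (S1 - \<gamma>0 p)) True * ?P (c + S1) False * ?P (c + S2) False)
    + exp (c - b + \<gamma> p) * (?P (b + (S1 - \<gamma>0 p)) True * ?P (c + S1) False * ?P (c + S2) True)"
    unfolding cond_moment_def fst_conv snd_conv sum_UNIV_bool3 outcome_prob_factor[OF assms(1)] presample
    using sum_split by (simp add: moment_def m_zero_ones_def b[symmetric] c[symmetric]) (simp add: algebra_simps)
  also have "\<dots> = ?P (b + S1 - \<gamma>0 p) False * ?P (c + S2) True * (exp (\<gamma> p - \<gamma>0 p) - 1)"
    using logit_prob_False_add_True[of "c + S1"] logit_prob_False_add_True[of "c + \<gamma>0 1 + ?S3"] sum_split(1)
    by (simp add: logit_prob_True exp_add exp_diff exp_minus field_simps) algebra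
  finally show ?thesis .
qed

lemma cond_moment_OneZeros:
  assumes "p \<ge> 2" and b: "b = x1 \<bullet> \<beta>0 + a" and c: "c = x2 \<bullet> \<beta>0 + a"
  shows "cond_moment p \<beta>0 \<gamma>0 OneZeros \<beta>0 (\<gamma>(1 := \<gamma>0 1)) ((x1, x2, x2), a) =
    logit_prob (b + \<gamma>0 p) True * logit_prob (c + \<gamma>0 1) False * (exp (\<gamma> p - \<gamma>0 p) - 1)"
proof -
  let ?P = "logit_prob"
  have presample: "presample_effect p \<gamma>0 OneZeros 1 = \<gamma>0 p" "presample_effect p \<gamma>0 OneZeros 2 = 0"
    "presample_effect p \<gamma>0 OneZeros 3 = 0"
    using assms(1) by (simp_all only: presample_effect_OneZeros)
  have "(x1 - x2) \<bullet> \<beta>0 = b - c"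
    using b c by (simp add: algebra_simps inner_diff_left)
  moreover have "(\<gamma>(1 := \<gamma>0 1)) p = \<gamma> p" using assms(1) by simp
  ultimately have "cond_moment p \<beta>0 \<gamma>0 OneZeros \<beta>0 (\<gamma>(1 := \<gamma>0 1)) ((x1, x2, x2), a) =
      exp (b - c + \<gamma> p) * (?P (b + \<gamma>0 p) False * ?P c True * ?P (c + \<gamma>0 1) False)
    + exp (b - c - \<gamma>0 1 + \<gamma> p) * (?P (b + \<gamma>0 p) False * ?P c True * ?P (c + \<gamma>0 1) True)
    - ?P (b + \<gamma>0 p) True * ?P (c + \<gamma>0 1) False * ?P (c + \<gamma>0 2) False
    - ?P (b + \<gamma>0 p) True * ?P (c + \<gamma>0 1) False * ?P (c + \<gamma>0 2) True"
    unfolding cond_moment_def fst_conv snd_conv sum_UNIV_bool3 outcome_prob_factor[OF assms(1)] presample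
    by (simp add: moment_def m_one_zeros_def b[symmetric] c[symmetric])
  also have "\<dots> = ?P (b + \<gamma>0 p) True * ?P (c + \<gamma>0 1) False * (exp (\<gamma> p - \<gamma>0 p) - 1)"
    using logit_prob_False_add_True[of c] logit_prob_False_add_True[of "c + \<gamma>0 2"]
    by (simp add: logit_prob_True exp_add exp_diff exp_minus field_simps) algebra
  finally show ?thesis .
qed

lemma set_integral_pos_AE:
  fixes f :: "'a \<Rightarrow> real"
  assumes int: "set_integrable M S f" and S: "S \<in> sets M" and pos: "measure M S > 0"
    and ae: "AE x in M. x \<in> S \<longrightarrow> f x > 0"
  shows "(LINT x:S|M. f x) > 0"
proof -
  let ?g = "\<lambda>x. indicator S x *\<^sub>R f x"
  have nonneg: "AE x in M. 0 \<le> ?g x"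
    using ae by eventually_elim (auto simp: indicator_def)
  have "integral\<^sup>L M ?g \<noteq> 0"
  proof
    assume "integral\<^sup>L M ?g = 0"
    then have "AE x in M. ?g x = 0"
      using integral_nonneg_eq_0_iff_AE[OF int[unfolded set_integrable_def] nonneg] by simp
    then have "AE x in M. x \<notin> S"
      using ae by eventually_elim (auto simp: indicator_def)
    then have "S \<in> null_sets M" using AE_iff_null_sets[OF S] by simp
    with pos show False by (simp add: measure_def null_sets_def)
  qed
  with integral_nonneg_AE[OF nonneg] show ?thesis
    unfolding set_lebesgue_integral_def by simp
qed

lemma cond_exp_pos_AE:
  assumes "set_integrable \<nu> S F" "S \<in> sets \<nu>" "measure \<nu> S > 0"
    and "AE z in \<nu>. z \<in> S \<longrightarrow> F z > 0"
  shows "cond_exp \<nu> S F > 0"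
  unfolding cond_exp_def using set_integral_pos_AE[OF assms] assms(3) by simp

lemma cond_exp_uminus:
  "set_integrable \<nu> S F \<Longrightarrow> cond_exp \<nu> S (\<lambda>z. - F z) = - cond_exp \<nu> S F"
  by (simp add: cond_exp_def set_integral_uminus)

lemma cond_exp_neg_AE:
  assumes "set_integrable \<nu> S F" "S \<in> sets \<nu>" "measure \<nu> S > 0"
    and "AE z in \<nu>. z \<in> S \<longrightarrow> F z < 0"
  shows "cond_exp \<nu> S F < 0"
proof -
  have "set_integrable \<nu> S (\<lambda>z. - F z)"
    using set_integrable_mult_right[of "- 1" \<nu> S F] assms(1) by simp
  then have "cond_exp \<nu> S (\<lambda>z. - F z) > 0"
    using assms(2-4) by (intro cond_exp_pos_AE) auto
  then show ?thesis by (simp add: cond_exp_uminus[OF assms(1)])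
qed

lemma cond_exp_eq_0_if_AE_eq_0:
  "AE z in \<nu>. F z = 0 \<Longrightarrow> cond_exp \<nu> S F = 0"
proof -
  assume "AE z in \<nu>. F z = 0"
  then have "AE z in \<nu>. indicator S z *\<^sub>R F z = 0" by eventually_elim simp
  then show ?thesis
    unfolding cond_exp_def set_lebesgue_integral_def by (simp add: integral_eq_zero_AE)
qed

lemma open_sign_region: "open (sign_region s)"
proof -
  have "sign_region s = (\<Inter>k. if s k then {x. fst x $ k < fst (snd x) $ k} else {x. fst (snd x) $ k < fst x $ k})"
    unfolding sign_region_def by (auto split: if_splits)
  also have "open \<dots>"
    by (intro open_INT ballI) (auto intro!: open_Collect_less continuous_intros)
  finally show ?thesis .
qed

lemma sign_region_times_UNIV_in_sets:
  "sets \<nu> = sets borel \<Longrightarrow> sign_region s \<times> UNIV \<in> sets \<nu>"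
  using open_sign_region[of s] by (simp add: open_Times)

lemma inner_diff_sign_on_sign_region:
  fixes u :: "real^'k"
  assumes "(x1, x2, x3) \<in> sign_region (\<lambda>k. u $ k < 0)"
  shows "(x1 - x2) \<bullet> u \<ge> 0" and "u \<noteq> 0 \<Longrightarrow> (x1 - x2) \<bullet> u > 0"
proof -
  have term_sign: "(x1 - x2) $ k * u $ k \<ge> 0" "u $ k \<noteq> 0 \<Longrightarrow> (x1 - x2) $ k * u $ k > 0" for k
  proof -
    have "if u $ k < 0 then x1 $ k < x2 $ k else x2 $ k < x1 $ k"
      using assms unfolding sign_region_def by (simp only: mem_Collect_eq fst_conv snd_conv) (erule spec)
    then show "(x1 - x2) $ k * u $ k \<ge> 0" "u $ k \<noteq> 0 \<Longrightarrow> (x1 - x2) $ k * u $ k > 0"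
      by (cases "u $ k < 0"; auto simp: zero_less_mult_iff zero_le_mult_iff)+
  qed
  show "(x1 - x2) \<bullet> u \<ge> 0"
    unfolding inner_vec_def using term_sign(1) by (auto intro: sum_nonneg)
  assume "u \<noteq> 0"
  then obtain k where "u $ k \<noteq> 0" by (metis vec_eq_iff zero_index)
  then show "(x1 - x2) \<bullet> u > 0"
    unfolding inner_vec_def using term_sign by (intro sum_pos2[where i = k]) auto
qed

lemma diagonal_regr_cases:
  assumes "fst (snd (fst z)) = snd (snd (fst z))"
  obtains x1 x2 a where "z = ((x1, x2, x2), a)"
  using assms by (metis prod.collapse)

lemma exp_mult_decreasing_gt:
  fixes t r r0 al w :: real
  assumes "al > 0" "w \<ge> 0" "t \<ge> 0" "r \<le> r0" "t > 0 \<or> r < r0"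
  shows "exp t * (al * exp (- r) + w) > al * exp (- r0) + w"
proof -
  have A: "al * exp (- r) + w > 0" using assms by (simp add: add_pos_nonneg)
  have "al * exp (- r0) \<le> al * exp (- r)" and "al * exp (- r) + w \<le> exp t * (al * exp (- r) + w)"
    using assms A by simp_all
  moreover have "al * exp (- r0) < al * exp (- r) \<or> al * exp (- r) + w < exp t * (al * exp (- r) + w)"
    using assms A by auto
  ultimately show ?thesis by linarith
qed

lemma exp_mult_decreasing_less:
  fixes t r r0 al w :: real
  assumes "al > 0" "w \<ge> 0" "t \<le> 0" "r0 \<le> r" "t < 0 \<or> r0 < r"
  shows "exp t * (al * exp (- r) + w) < al * exp (- r0) + w"
proof -
  have "exp t * (al * exp (- r) + w) < exp t * (exp (- t) * (al * exp (- r0) + w))"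
    using exp_mult_decreasing_gt[of al w "- t" r0 r] assms by simp
  also have "\<dots> = al * exp (- r0) + w" by (simp add: exp_minus)
  finally show ?thesis .
qed

context
  fixes F :: "'k::finite regr \<times> real \<Rightarrow> real" and K al w :: "real^'k \<Rightarrow> real^'k \<Rightarrow> real \<Rightarrow> real"
    and u :: "real^'k" and r r0 :: real
  assumes F_diagonal: "\<And>x1 x2 a. F ((x1, x2, x2), a) = K x1 x2 a * (exp ((x1 - x2) \<bullet> u)
      * (al x1 x2 a * exp (- r) + w x1 x2 a) - (al x1 x2 a * exp (- r0) + w x1 x2 a))"
    and K_pos: "\<And>x1 x2 a. K x1 x2 a > 0" and al_pos: "\<And>x1 x2 a. al x1 x2 a > 0"
    and w_nonneg: "\<And>x1 x2 a. w x1 x2 a \<ge> 0"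
begin

lemma AE_pos_on_sign_region:
  assumes "AE z in \<nu>. fst (snd (fst z)) = snd (snd (fst z))" and "r \<le> r0" and "u \<noteq> 0 \<or> r < r0"
  shows "AE z in \<nu>. z \<in> sign_region (\<lambda>k. u $ k < 0) \<times> UNIV \<longrightarrow> F z > 0"
  using assms(1)
proof eventually_elim
  case (elim z)
  then obtain x1 x2 a where z: "z = ((x1, x2, x2), a)" by (rule diagonal_regr_cases)
  show ?case
    using inner_diff_sign_on_sign_region[of x1 x2 x2 u] assms(2,3)
    by (auto simp: z F_diagonal intro!: mult_pos_pos K_pos exp_mult_decreasing_gt al_pos w_nonneg)
qed

lemma AE_neg_on_sign_region:
  assumes "AE z in \<nu>. fst (snd (fst z)) = snd (snd (fst z))" and "r0 < r"
  shows "AE z in \<nu>. z \<in> sign_region (\<lambda>k. (- u) $ k < 0) \<times> UNIV \<longrightarrow> F z < 0"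
  using assms(1)
proof eventually_elim
  case (elim z)
  then obtain x1 x2 a where z: "z = ((x1, x2, x2), a)" by (rule diagonal_regr_cases)
  show ?case
    using inner_diff_sign_on_sign_region[of x1 x2 x2 "- u"] assms(2)
    by (auto simp: z F_diagonal intro!: mult_pos_neg K_pos exp_mult_decreasing_less al_pos w_nonneg)
qed

lemma cond_exp_sign_regions_eq_0_iff:
  assumes sets: "sets \<nu> = sets borel"
    and diag: "AE z in \<nu>. fst (snd (fst z)) = snd (snd (fst z))"
    and pos: "\<And>s. measure \<nu> (sign_region s \<times> UNIV) > 0"
    and int: "\<And>s. set_integrable \<nu> (sign_region s \<times> UNIV) F"
  shows "(\<forall>s. cond_exp \<nu> (sign_region s \<times> UNIV) F = 0) \<longleftrightarrow> u = 0 \<and> r = r0"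
proof
  assume eq: "u = 0 \<and> r = r0"
  have "AE z in \<nu>. F z = 0"
    using diag
  proof eventually_elim
    case (elim z)
    then obtain x1 x2 a where "z = ((x1, x2, x2), a)" by (rule diagonal_regr_cases)
    then show ?case using eq by (simp add: F_diagonal)
  qed
  then show "\<forall>s. cond_exp \<nu> (sign_region s \<times> UNIV) F = 0"
    by (simp add: cond_exp_eq_0_if_AE_eq_0)
next
  assume zero: "\<forall>s. cond_exp \<nu> (sign_region s \<times> UNIV) F = 0"
  show "u = 0 \<and> r = r0"
  proof (rule ccontr)
    assume ne: "\<not> (u = 0 \<and> r = r0)"
    show False
    proof (cases "r \<le> r0")
      case True
      with ne have "cond_exp \<nu> (sign_region (\<lambda>k. u $ k < 0) \<times> UNIV) F > 0"
        by (intro cond_exp_pos_AE int pos sign_region_times_UNIV_in_sets[OF sets]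
            AE_pos_on_sign_region[OF diag]) auto
      with zero show False by simp
    next
      case False
      then have "cond_exp \<nu> (sign_region (\<lambda>k. (- u) $ k < 0) \<times> UNIV) F < 0"
        by (intro cond_exp_neg_AE int pos sign_region_times_UNIV_in_sets[OF sets]
            AE_neg_on_sign_region[OF diag]) auto
      with zero show False by simp
    qed
  qed
qed

end

lemma cond_exp_UNIV_eq_0_iff:
  fixes \<nu> :: "('k::finite regr \<times> real) measure" and F :: "'k regr \<times> real \<Rightarrow> real"
  assumes "prob_space \<nu>" and sets: "sets \<nu> = sets borel"
    and diag: "AE z in \<nu>. fst (snd (fst z)) = snd (snd (fst z))"
    and int: "integrable \<nu> F"
    and F: "\<And>x1 x2 a. F ((x1, x2, x2), a) = K x1 x2 a * c"
    and K: "\<And>x1 x2 a. K x1 x2 a > 0"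
  shows "cond_exp \<nu> UNIV F = 0 \<longleftrightarrow> c = 0"
proof -
  have "space \<nu> = UNIV" using sets_eq_imp_space_eq[OF sets] by simp
  then have UNIV: "UNIV \<in> sets \<nu>" "measure \<nu> UNIV > 0"
    using sets.top[of \<nu>] prob_space.prob_space[OF assms(1)] by simp_all
  have si: "set_integrable \<nu> UNIV F" using int by (simp add: set_integrable_def)
  have F_AE: "AE z in \<nu>. F z = K (fst (fst z)) (fst (snd (fst z))) (snd z) * c"
    using diag by eventually_elim (metis diagonal_regr_cases F fst_conv snd_conv)
  consider "c > 0" | "c < 0" | "c = 0" by linarith
  then show ?thesis
  proof cases
    case 1
    from F_AE have "AE z in \<nu>. z \<in> UNIV \<longrightarrow> F z > 0"
      by eventually_elim (simp add: K 1)
    then have "cond_exp \<nu> UNIV F > 0" by (rule cond_exp_pos_AE[OF si UNIV])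
    then show ?thesis using 1 by simp
  next
    case 2
    from F_AE have "AE z in \<nu>. z \<in> UNIV \<longrightarrow> F z < 0"
      by eventually_elim (simp add: K 2 mult_pos_neg)
    then have "cond_exp \<nu> UNIV F < 0" by (rule cond_exp_neg_AE[OF si UNIV])
    then show ?thesis using 2 by simp
  next
    case 3
    then show ?thesis using F_AE by (simp add: cond_exp_eq_0_if_AE_eq_0)
  qed
qed

lemma cond_moment_Zeros_identifies:
  assumes "p \<ge> 2" and "sets \<nu> = sets borel"
    and "AE z in \<nu>. fst (snd (fst z)) = snd (snd (fst z))"
    and "\<forall>s. measure \<nu> (sign_region s \<times> UNIV) > 0"
    and "\<forall>s. set_integrable \<nu> (sign_region s \<times> UNIV) (cond_moment p \<beta>0 \<gamma>0 Zeros \<beta> \<gamma>)"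
  shows "(\<forall>s. cond_exp \<nu> (sign_region s \<times> UNIV) (cond_moment p \<beta>0 \<gamma>0 Zeros \<beta> \<gamma>) = 0)
    \<longleftrightarrow> \<beta> = \<beta>0 \<and> \<gamma> 1 = \<gamma>0 1"
proof -
  have "(\<forall>s. cond_exp \<nu> (sign_region s \<times> UNIV) (cond_moment p \<beta>0 \<gamma>0 Zeros \<beta> \<gamma>) = 0)
    \<longleftrightarrow> \<beta> - \<beta>0 = 0 \<and> \<gamma> 1 = \<gamma>0 1"
    by (rule cond_exp_sign_regions_eq_0_iff[
          where K = "\<lambda>x1 x2 a. logit_prob (x1 \<bullet> \<beta>0 + a) True * logit_prob (x2 \<bullet> \<beta>0 + a) False
                                * logit_prob (x2 \<bullet> \<beta>0 + a + \<gamma>0 1) False"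
            and al = "\<lambda>x1 x2 a. exp (x2 \<bullet> \<beta>0 + a + \<gamma>0 1)" and w = "\<lambda>_ _ _. 1"])
      (use assms in \<open>simp_all add: cond_moment_Zeros logit_prob_pos\<close>)
  then show ?thesis by simp
qed

lemma cond_moment_Ones_identifies:
  assumes "p \<ge> 2" and "sets \<nu> = sets borel"
    and "AE z in \<nu>. fst (snd (fst z)) = snd (snd (fst z))"
    and "\<forall>s. measure \<nu> (sign_region s \<times> UNIV) > 0"
    and "\<forall>s. set_integrable \<nu> (sign_region s \<times> UNIV) (cond_moment p \<beta>0 \<gamma>0 Ones \<beta> \<gamma>)"
  shows "(\<forall>s. cond_exp \<nu> (sign_region s \<times> UNIV) (cond_moment p \<beta>0 \<gamma>0 Ones \<beta> \<gamma>) = 0)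
    \<longleftrightarrow> \<beta> = \<beta>0 \<and> \<gamma> 1 = \<gamma>0 1"
proof -
  have "(\<forall>s. cond_exp \<nu> (sign_region s \<times> UNIV) (cond_moment p \<beta>0 \<gamma>0 Ones \<beta> \<gamma>) = 0)
    \<longleftrightarrow> \<beta>0 - \<beta> = 0 \<and> \<gamma> 1 = \<gamma>0 1"
    by (rule cond_exp_sign_regions_eq_0_iff[
          where K = "\<lambda>x1 x2 a. logit_prob (x1 \<bullet> \<beta>0 + a + sum \<gamma>0 {1..p}) False
                    * logit_prob (x2 \<bullet> \<beta>0 + a + sum \<gamma>0 {2..p}) False
                    * logit_prob (x2 \<bullet> \<beta>0 + a + sum \<gamma>0 {1..p}) True"
            and al = "\<lambda>_ _ _. 1" and w = "\<lambda>x1 x2 a. exp (x2 \<bullet> \<beta>0 + a + sum \<gamma>0 {2..p})"])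
      (use assms in \<open>simp_all add: cond_moment_Ones logit_prob_pos\<close>)
  then show ?thesis by auto
qed

lemma cond_moment_ZeroOnes_identifies:
  assumes "p \<ge> 2" and "prob_space \<nu>" and "sets \<nu> = sets borel"
    and "AE z in \<nu>. fst (snd (fst z)) = snd (snd (fst z))"
    and "integrable \<nu> (cond_moment p \<beta>0 \<gamma>0 ZeroOnes \<beta>0 (\<gamma>(1 := \<gamma>0 1)))"
  shows "cond_exp \<nu> UNIV (cond_moment p \<beta>0 \<gamma>0 ZeroOnes \<beta>0 (\<gamma>(1 := \<gamma>0 1))) = 0
    \<longleftrightarrow> \<gamma> p = \<gamma>0 p"
proof -
  have "cond_exp \<nu> UNIV (cond_moment p \<beta>0 \<gamma>0 ZeroOnes \<beta>0 (\<gamma>(1 := \<gamma>0 1))) = 0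
    \<longleftrightarrow> exp (\<gamma> p - \<gamma>0 p) - 1 = 0"
    by (rule cond_exp_UNIV_eq_0_iff[OF assms(2-5),
          where K = "\<lambda>x1 x2 a. logit_prob (x1 \<bullet> \<beta>0 + a + sum \<gamma>0 {1..p} - \<gamma>0 p) False
                    * logit_prob (x2 \<bullet> \<beta>0 + a + sum \<gamma>0 {2..p}) True"])
      \<comment> \<open>without \<open>del: One_nat_def\<close> the update \<open>\<gamma>(1 := _)\<close> becomes \<open>\<gamma>(Suc 0 := _)\<close>
          and no longer matches the closed form\<close>
      (use assms in \<open>simp_all add: cond_moment_ZeroOnes logit_prob_pos del: One_nat_def\<close>)
  then show ?thesis by simp
qed

lemma cond_moment_OneZeros_identifies:
  assumes "p \<ge> 2" and "prob_space \<nu>" and "sets \<nu> = sets borel"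
    and "AE z in \<nu>. fst (snd (fst z)) = snd (snd (fst z))"
    and "integrable \<nu> (cond_moment p \<beta>0 \<gamma>0 OneZeros \<beta>0 (\<gamma>(1 := \<gamma>0 1)))"
  shows "cond_exp \<nu> UNIV (cond_moment p \<beta>0 \<gamma>0 OneZeros \<beta>0 (\<gamma>(1 := \<gamma>0 1))) = 0
    \<longleftrightarrow> \<gamma> p = \<gamma>0 p"
proof -
  have "cond_exp \<nu> UNIV (cond_moment p \<beta>0 \<gamma>0 OneZeros \<beta>0 (\<gamma>(1 := \<gamma>0 1))) = 0
    \<longleftrightarrow> exp (\<gamma> p - \<gamma>0 p) - 1 = 0"
    by (rule cond_exp_UNIV_eq_0_iff[OF assms(2-5),
          where K = "\<lambda>x1 x2 a. logit_prob (x1 \<bullet> \<beta>0 + a + \<gamma>0 p) True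
                    * logit_prob (x2 \<bullet> \<beta>0 + a + \<gamma>0 1) False"])
      (use assms in \<open>simp_all add: cond_moment_OneZeros logit_prob_pos del: One_nat_def\<close>)
  then show ?thesis by simp
qed

theorem theorem2:
  fixes p :: nat and \<beta>0 :: "real^'k" and \<gamma>0 :: "nat \<Rightarrow> real"
  assumes "p \<ge> 2"
  shows
   "(\<forall>i \<in> {Zeros, Ones}. \<forall>\<nu> :: ('k regr \<times> real) measure.
       prob_space \<nu> \<and> sets \<nu> = sets borel
       \<and> (AE z in \<nu>. fst (snd (fst z)) = snd (snd (fst z)))
       \<and> (\<forall>s. measure \<nu> (sign_region s \<times> UNIV) > 0) \<longrightarrow>
       (\<forall>\<beta> \<gamma>. (\<forall>s. set_integrable \<nu> (sign_region s \<times> UNIV) (cond_moment p \<beta>0 \<gamma>0 i \<beta> \<gamma>)) \<longrightarrow>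
          ((\<forall>s. cond_exp \<nu> (sign_region s \<times> UNIV) (cond_moment p \<beta>0 \<gamma>0 i \<beta> \<gamma>) = 0)
             \<longleftrightarrow> \<beta> = \<beta>0 \<and> \<gamma> 1 = \<gamma>0 1)))
  \<and> (\<forall>i \<in> {ZeroOnes, OneZeros}. \<forall>\<nu> :: ('k regr \<times> real) measure.
       prob_space \<nu> \<and> sets \<nu> = sets borel
       \<and> (AE z in \<nu>. fst (snd (fst z)) = snd (snd (fst z))) \<longrightarrow>
       (\<forall>\<gamma>. integrable \<nu> (cond_moment p \<beta>0 \<gamma>0 i \<beta>0 (\<gamma>(1 := \<gamma>0 1))) \<longrightarrow>
          (cond_exp \<nu> UNIV (cond_moment p \<beta>0 \<gamma>0 i \<beta>0 (\<gamma>(1 := \<gamma>0 1))) = 0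
             \<longleftrightarrow> \<gamma> p = \<gamma>0 p)))"
proof (intro conjI ballI allI impI)
  fix i \<nu> \<beta> \<gamma>
  assume "i \<in> {Zeros, Ones}"
    and "prob_space \<nu> \<and> sets \<nu> = sets borel \<and> (AE z in \<nu>. fst (snd (fst z)) = snd (snd (fst z)))
      \<and> (\<forall>s. measure \<nu> (sign_region s \<times> UNIV) > 0)"
    and "\<forall>s. set_integrable \<nu> (sign_region s \<times> UNIV) (cond_moment p \<beta>0 \<gamma>0 i \<beta> \<gamma>)"
  then show "(\<forall>s. cond_exp \<nu> (sign_region s \<times> UNIV) (cond_moment p \<beta>0 \<gamma>0 i \<beta> \<gamma>) = 0)
      \<longleftrightarrow> \<beta> = \<beta>0 \<and> \<gamma> 1 = \<gamma>0 1"
    by (elim insertE emptyE conjE)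
      (simp_all add: cond_moment_Zeros_identifies[OF assms] cond_moment_Ones_identifies[OF assms])
next
  fix i \<nu> \<gamma>
  assume "i \<in> {ZeroOnes, OneZeros}"
    and "prob_space \<nu> \<and> sets \<nu> = sets borel \<and> (AE z in \<nu>. fst (snd (fst z)) = snd (snd (fst z)))"
    and "integrable \<nu> (cond_moment p \<beta>0 \<gamma>0 i \<beta>0 (\<gamma>(1 := \<gamma>0 1)))"
  then show "cond_exp \<nu> UNIV (cond_moment p \<beta>0 \<gamma>0 i \<beta>0 (\<gamma>(1 := \<gamma>0 1))) = 0 \<longleftrightarrow> \<gamma> p = \<gamma>0 p"
    by (elim insertE emptyE conjE)
      (simp_all add: cond_moment_ZeroOnes_identifies[OF assms] cond_moment_OneZeros_identifies[OF assms]
        del: One_nat_def)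
qed

end
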